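(* Let $p\in(1,\infty)$. Let $K>0$, $M\ge0$ and $\alpha<-(p-1)$, and define $F,G:[0,M]\to\mathbb{R}$ by $$F(x)=\frac1\alpha\big((x+K)^\alpha-(M+K)^\alpha\big),\qquad G(x)=\frac{p}{\alpha+p-1}(x+K)^{\frac{\alpha+p-1}{p}}.$$ Then there exists $C>0$ depending only on $p$ such that for all $x,y\in[0,M]$ and all $a,b\ge0$, $$|x-y|^{p-2}(x-y)\big(F(x)a^p-F(y)b^p\big)\ge\frac12|G(x)-G(y)|^p\max\{a^p,b^p\}-C\Big(1+\Big(\frac{|\alpha+p-1|}{|\alpha|}\Big)^p\Big)\max\{|G(x)|^p,|G(y)|^p\}|a-b|^p.$$
   Context: Convention: for $x=y$ the factor $|x-y|^{p-2}(x-y)$ is interpreted as $0$. *)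

theory Defs
  imports "HOL-Analysis.Analysis"
begin

definition sgnpow :: "real \<Rightarrow> real \<Rightarrow> real" where
  "sgnpow p t = (if t = 0 then 0 else \<bar>t\<bar> powr (p - 2) * t)"

definition Ffun :: "real \<Rightarrow> real \<Rightarrow> real \<Rightarrow> real \<Rightarrow> real" where
  "Ffun K M \<alpha> x = (1 / \<alpha>) * ((x + K) powr \<alpha> - (M + K) powr \<alpha>)"

definition Gfun :: "real \<Rightarrow> real \<Rightarrow> real \<Rightarrow> real \<Rightarrow> real" where
  "Gfun p K \<alpha> x = (p / (\<alpha> + p - 1)) * (x + K) powr ((\<alpha> + p - 1) / p)"

end

theory Submission
  imports Defs
begin

text \<open>
  Let \<open>y < x\<close>; the case \<open>x < y\<close> is symmetric and \<open>x = y\<close> is trivial. Since \<open>F' = (G')\<^sup>p\<close>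
  with \<open>G' = (\<cdot> + K) powr ((\<alpha> - 1) / p) \<ge> 0\<close>, Jensen's inequality gives
  \<open>P := (G x - G y)\<^sup>p \<le> (x - y)\<^bsup>p-1\<^esup> (F x - F y)\<close>, so the left-hand side is at least
  \<open>P b\<^sup>p - Q (a\<^sup>p - b\<^sup>p)\<close> with \<open>Q = -(x - y)\<^bsup>p-1\<^esup> F x \<ge> 0\<close>. For \<open>a \<le> b\<close> this is at least
  \<open>P b\<^sup>p\<close>. For \<open>a > b\<close> we use \<open>a\<^sup>p - b\<^sup>p \<le> p a\<^bsup>p-1\<^esup> (a - b)\<close> and a Young-type splitting
  that absorbs the cross term into \<open>P a\<^sup>p / 2\<close> at the price of \<open>(P + Q)\<^sup>p / P\<^bsup>p-1\<^esup> (a - b)\<^sup>p\<close>.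
  What makes this affordable is \<open>Q\<^sup>p \<le> (|\<alpha> + p - 1| / |\<alpha>|)\<^sup>p |G x|\<^sup>p P\<^bsup>p-1\<^esup>\<close>, which follows
  from \<open>-F x \<le> (x + K)\<^sup>\<alpha> / |\<alpha>|\<close> and from \<open>G x - G y \<ge> G' x (x - y)\<close>, as \<open>G'\<close> is decreasing.
\<close>

lemma powr_diff_one_mult:
  fixes x p :: real
  assumes "0 \<le> x"
  shows "x powr (p - 1) * x = x powr p"
  using powr_mult_base[OF assms, of "p - 1"] by (simp add: mult.commute)

lemma powr_above_tangent:
  fixes p c g :: real
  assumes p: "1 \<le> p" and c: "0 \<le> c" and g: "0 \<le> g"
  shows "c powr p + p * c powr (p - 1) * (g - c) \<le> g powr p"
proof -
  consider "c = 0" | "g = 0" | "0 < c" "0 < g" using c g by linarith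
  then show ?thesis
  proof cases
    case 1
    then show ?thesis by simp
  next
    case 2
    have "c powr p + p * c powr (p - 1) * (g - c) = (1 - p) * c powr p"
      using 2 powr_diff_one_mult[OF c, of p] by (simp add: algebra_simps)
    also have "\<dots> \<le> 0"
      using p by (simp add: mult_nonpos_nonneg)
    finally show ?thesis using 2 by simp
  next
    case 3
    have "(\<lambda>t. t powr p) g - (\<lambda>t. t powr p) c \<ge> p * c powr (p - 1) * (g - c)"
      using 3 by (intro convex_on_imp_above_tangent[OF powr_convex[OF p]])
        (auto intro!: derivative_eq_intros simp: interior_open)
    then show ?thesis by simp
  qed
qed

lemma powr_diff_le_mult:
  fixes p a b :: real
  assumes "1 \<le> p" "0 \<le> b" "b \<le> a"
  shows "a powr p - b powr p \<le> p * a powr (p - 1) * (a - b)"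
  using powr_above_tangent[of p a b] assms by (simp add: algebra_simps)

lemma powr_sum_div_le:
  fixes p P Q :: real
  assumes p: "1 \<le> p" and P: "0 < P" and Q: "0 \<le> Q"
  shows "(P + Q) powr p / P powr (p - 1) \<le> 2 powr p * (P + Q powr p / P powr (p - 1))"
proof -
  have "(P + Q) powr p \<le> (2 * max P Q) powr p"
    using P Q p by (intro powr_mono2) auto
  also have "\<dots> = 2 powr p * max P Q powr p"
    using P Q by (simp add: powr_mult)
  also have "\<dots> \<le> 2 powr p * (P powr p + Q powr p)"
    by (intro mult_left_mono) (auto simp: max_def)
  finally have "(P + Q) powr p / P powr (p - 1) \<le> 2 powr p * (P powr p + Q powr p) / P powr (p - 1)"
    using P by (simp add: divide_right_mono)
  also have "\<dots> = 2 powr p * (P + Q powr p / P powr (p - 1))"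
    using P by (simp add: powr_diff field_simps)
  finally show ?thesis .
qed

lemma powr_diff_absorb:
  fixes p P Q a b :: real
  assumes p: "1 < p" and P: "0 < P" and Q: "0 \<le> Q" and b: "0 \<le> b" and ba: "b \<le> a"
  shows "(P + Q) * (a powr p - b powr p)
    \<le> P / 2 * a powr p + p * (2 * p) powr (p - 1) * ((P + Q) powr p / P powr (p - 1)) * (a - b) powr p"
    (is "_ \<le> _ + ?R")
proof -
  define h where "h = a - b"
  \<comment> \<open>Young's inequality by hand: either \<open>h \<le> \<delta> a\<close> and the term is absorbed into
    \<open>P a\<^sup>p / 2\<close>, or \<open>a\<close> is controlled by \<open>h / \<delta>\<close>.\<close>
  define \<delta> where "\<delta> = P / (2 * p * (P + Q))"
  have PQ: "0 < P + Q" and \<delta>: "0 < \<delta>" and a: "0 \<le> a" and h: "0 \<le> h"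
    using P Q p b ba by (auto simp: \<delta>_def h_def)
  have R: "0 \<le> ?R"
    using p by simp
  have "(P + Q) * (a powr p - b powr p) \<le> (P + Q) * p * a powr (p - 1) * h"
    using powr_diff_le_mult[of p b a] p b ba PQ by (simp add: h_def mult.assoc mult_left_mono)
  also have "\<dots> \<le> P / 2 * a powr p + ?R"
  proof (cases "h \<le> \<delta> * a")
    case True
    have "(P + Q) * p * a powr (p - 1) * h \<le> (P + Q) * p * a powr (p - 1) * (\<delta> * a)"
      using True PQ p by (intro mult_left_mono) auto
    also have "\<dots> = (P + Q) * p * \<delta> * (a powr (p - 1) * a)"
      by (simp only: mult_ac)
    also have "\<dots> = P / 2 * a powr p"
      using PQ p a by (simp add: \<delta>_def powr_diff_one_mult)
    finally show ?thesis using R by linarith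
  next
    case False
    then have "a \<le> h / \<delta>"
      using \<delta> by (simp add: field_simps)
    then have "(P + Q) * p * a powr (p - 1) * h \<le> (P + Q) * p * (h / \<delta>) powr (p - 1) * h"
      using PQ p a h by (intro mult_right_mono mult_left_mono powr_mono2) auto
    also have "\<dots> = p * (2 * p) powr (p - 1) * ((P + Q) powr (p - 1) * (P + Q)) / P powr (p - 1)
        * (h powr (p - 1) * h)"
    proof -
      have "h / \<delta> = (2 * p) * (P + Q) * h / P"
        using P PQ p by (simp add: \<delta>_def)
      then show ?thesis
        using P PQ p h by (simp add: powr_divide powr_mult)
    qed
    also have "\<dots> = ?R"
      using PQ h by (simp add: powr_diff_one_mult h_def)
    moreover have "0 \<le> P / 2 * a powr p"
      using P by simp
    ultimately show ?thesis by linarith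
  qed
  finally show ?thesis .
qed

lemma absorb_cross_term:
  fixes p P Q W \<rho> a b :: real
  assumes p: "1 < p" and P: "0 < P" and Q: "0 \<le> Q" and PW: "P \<le> W" and \<rho>: "0 \<le> \<rho>"
    and QP: "Q powr p \<le> \<rho> * W * P powr (p - 1)" and a: "0 \<le> a" and b: "0 \<le> b"
  shows "1/2 * P * max (a powr p) (b powr p)
      - p * (2 * p) powr (p - 1) * 2 powr p * (1 + \<rho>) * W * \<bar>a - b\<bar> powr p
    \<le> P * b powr p - Q * (a powr p - b powr p)"
proof (cases "a \<le> b")
  case True
  then have "a powr p \<le> b powr p"
    using a p by (intro powr_mono2) auto
  moreover have "0 \<le> p * (2 * p) powr (p - 1) * 2 powr p * (1 + \<rho>) * W * \<bar>a - b\<bar> powr p"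
    using p \<rho> P PW by simp
  moreover have "Q * (a powr p - b powr p) \<le> 0"
    using calculation(1) Q by (simp add: mult_nonneg_nonpos)
  moreover have "0 \<le> P * b powr p"
    using P by simp
  ultimately show ?thesis
    by (simp add: max_def)
next
  case False
  have "(P + Q) powr p / P powr (p - 1) \<le> 2 powr p * (P + Q powr p / P powr (p - 1))"
    using powr_sum_div_le p P Q by simp
  also have "\<dots> \<le> 2 powr p * ((1 + \<rho>) * W)"
  proof -
    have "Q powr p / P powr (p - 1) \<le> \<rho> * W"
      using QP P by (simp add: divide_le_eq)
    then show ?thesis
      using PW by (intro mult_left_mono) (auto simp: algebra_simps)
  qed
  finally have PQ_bound: "(P + Q) powr p / P powr (p - 1) \<le> 2 powr p * ((1 + \<rho>) * W)" .
  have "(P + Q) * (a powr p - b powr p)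
      \<le> P / 2 * a powr p + p * (2 * p) powr (p - 1) * ((P + Q) powr p / P powr (p - 1)) * (a - b) powr p"
    using powr_diff_absorb[OF p P Q b] False by simp
  also have "\<dots> \<le> P / 2 * a powr p + p * (2 * p) powr (p - 1) * (2 powr p * ((1 + \<rho>) * W)) * (a - b) powr p"
    using PQ_bound p by (intro add_left_mono mult_right_mono mult_left_mono) auto
  also have "\<dots> = P / 2 * a powr p + p * (2 * p) powr (p - 1) * 2 powr p * (1 + \<rho>) * W * \<bar>a - b\<bar> powr p"
    using False by (simp add: mult_ac)
  finally have absorbed: "(P + Q) * (a powr p - b powr p)
      \<le> P / 2 * a powr p + p * (2 * p) powr (p - 1) * 2 powr p * (1 + \<rho>) * W * \<bar>a - b\<bar> powr p" .
  have "b powr p \<le> a powr p"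
    using False b p by (intro powr_mono2) auto
  then have "max (a powr p) (b powr p) = a powr p"
    by simp
  moreover have "P * b powr p - Q * (a powr p - b powr p) = P * a powr p - (P + Q) * (a powr p - b powr p)"
    by (simp add: algebra_simps)
  ultimately show ?thesis
    using absorbed by simp
qed

text \<open>
  Jensen's inequality \<open>(\<integral> g)\<^sup>p \<le> (u - v)\<^bsup>p-1\<^esup> \<integral> g\<^sup>p\<close> in integral-free form: for the mean
  slope \<open>c\<close> of \<open>G\<close>, the function \<open>\<phi>\<close> below is nondecreasing by the tangent inequality for
  \<open>t\<^sup>p\<close> at \<open>c\<close>, and \<open>\<phi> u - \<phi> v = F u - F v - c\<^sup>p (u - v)\<close>.
\<close>

lemma powr_increment_le_by_derivatives:
  fixes F G g :: "real \<Rightarrow> real" and p u v :: real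
  assumes p: "1 \<le> p" and vu: "v < u"
    and G: "\<And>w. w \<in> {v..u} \<Longrightarrow> (G has_real_derivative g w) (at w)"
    and F: "\<And>w. w \<in> {v..u} \<Longrightarrow> (F has_real_derivative g w powr p) (at w)"
    and g: "\<And>w. w \<in> {v..u} \<Longrightarrow> 0 \<le> g w"
  shows "(G u - G v) powr p \<le> (u - v) powr (p - 1) * (F u - F v)"
proof -
  define c where "c = (G u - G v) / (u - v)"
  have "G v \<le> G u"
    using deriv_nonneg_imp_mono[OF G g] vu by simp
  then have c: "0 \<le> c"
    using vu by (simp add: c_def)
  have Gc: "G u - G v = c * (u - v)"
    using vu by (simp add: c_def)
  define \<phi> where "\<phi> w = F w - c powr p * w - p * c powr (p - 1) * (G w - c * w)" for w
  have "\<phi> v \<le> \<phi> u"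
  proof (rule deriv_nonneg_imp_mono[of v u])
    fix w assume w: "w \<in> {v..u}"
    show "(\<phi> has_real_derivative
        g w powr p - c powr p * 1 - p * c powr (p - 1) * (g w - c * 1)) (at w)"
      unfolding \<phi>_def by (intro DERIV_diff DERIV_cmult F G w DERIV_ident)
    show "0 \<le> g w powr p - c powr p * 1 - p * c powr (p - 1) * (g w - c * 1)"
      using powr_above_tangent[OF p c g[OF w]] by simp
  qed (use vu in auto)
  moreover have "G u - c * u = G v - c * v"
    using Gc by (simp add: algebra_simps)
  ultimately have "c powr p * (u - v) \<le> F u - F v"
    unfolding \<phi>_def by (simp add: right_diff_distrib)
  then have "(u - v) powr (p - 1) * (c powr p * (u - v)) \<le> (u - v) powr (p - 1) * (F u - F v)"
    by (rule mult_left_mono) simp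
  moreover have "(u - v) powr (p - 1) * (c powr p * (u - v)) = (G u - G v) powr p"
    using Gc c vu powr_diff_one_mult[of "u - v" p] by (simp add: powr_mult mult_ac)
  ultimately show ?thesis by simp
qed

lemma Ffun_has_derivative:
  assumes "0 < x + K" "\<alpha> \<noteq> 0"
  shows "(Ffun K M \<alpha> has_real_derivative (x + K) powr (\<alpha> - 1)) (at x)"
  unfolding Ffun_def[abs_def] using assms
  by (auto intro!: derivative_eq_intros)

lemma Gfun_has_derivative:
  assumes "0 < x + K" "0 < p" "\<alpha> + p - 1 \<noteq> 0"
  shows "(Gfun p K \<alpha> has_real_derivative (x + K) powr ((\<alpha> - 1) / p)) (at x)"
proof -
  have "(\<alpha> + p - 1) / p - 1 = (\<alpha> - 1) / p"
    using assms by (simp add: field_simps)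
  then show ?thesis
    unfolding Gfun_def[abs_def] using assms
    by (auto intro!: derivative_eq_intros)
qed

lemma Gfun_increment_powr_le:
  assumes p: "1 < p" and \<alpha>: "\<alpha> \<noteq> 0" "\<alpha> + p - 1 \<noteq> 0" and y: "0 < y + K" and yx: "y < x"
  shows "(Gfun p K \<alpha> x - Gfun p K \<alpha> y) powr p
    \<le> (x - y) powr (p - 1) * (Ffun K M \<alpha> x - Ffun K M \<alpha> y)"
proof (rule powr_increment_le_by_derivatives)
  fix w assume w: "w \<in> {y..x}"
  then have wK: "0 < w + K"
    using y by auto
  show "(Gfun p K \<alpha> has_real_derivative (w + K) powr ((\<alpha> - 1) / p)) (at w)"
    using Gfun_has_derivative wK p \<alpha> by simp
  have "((w + K) powr ((\<alpha> - 1) / p)) powr p = (w + K) powr (\<alpha> - 1)"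
    using p by (simp add: powr_powr)
  then show "(Ffun K M \<alpha> has_real_derivative ((w + K) powr ((\<alpha> - 1) / p)) powr p) (at w)"
    using Ffun_has_derivative wK \<alpha> by simp
qed (use p yx in auto)

lemma Gfun_increment_ge:
  assumes p: "0 < p" and \<alpha>: "\<alpha> \<le> 1" "\<alpha> + p - 1 \<noteq> 0" and y: "0 < y + K" and yx: "y < x"
  shows "(x + K) powr ((\<alpha> - 1) / p) * (x - y) \<le> Gfun p K \<alpha> x - Gfun p K \<alpha> y"
proof -
  obtain z where z: "y < z" "z < x"
    and mvt: "Gfun p K \<alpha> x - Gfun p K \<alpha> y = (x - y) * (z + K) powr ((\<alpha> - 1) / p)"
    using MVT2[OF yx, of "Gfun p K \<alpha>" "\<lambda>w. (w + K) powr ((\<alpha> - 1) / p)"]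
      Gfun_has_derivative y p \<alpha> by force
  have "(x + K) powr ((\<alpha> - 1) / p) \<le> (z + K) powr ((\<alpha> - 1) / p)"
    using z y p \<alpha> by (intro powr_mono2') (auto simp: divide_nonpos_pos)
  then show ?thesis
    using mvt yx by (simp add: mult.commute mult_right_mono)
qed

lemma Ffun_nonpos:
  assumes "\<alpha> < 0" "0 < x + K" "x \<le> M"
  shows "Ffun K M \<alpha> x \<le> 0"
proof -
  have "(M + K) powr \<alpha> \<le> (x + K) powr \<alpha>"
    using assms by (intro powr_mono2') auto
  then show ?thesis
    using assms unfolding Ffun_def by (simp add: divide_nonneg_neg)
qed

lemma minus_Ffun_le:
  assumes "\<alpha> < 0"
  shows "- Ffun K M \<alpha> x \<le> (x + K) powr \<alpha> / - \<alpha>"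
  using assms by (simp add: Ffun_def field_simps)

lemma abs_Gfun_powr:
  assumes "0 < p" "0 < x + K"
  shows "\<bar>Gfun p K \<alpha> x\<bar> powr p = (p / \<bar>\<alpha> + p - 1\<bar>) powr p * (x + K) powr (\<alpha> + p - 1)"
proof -
  have "\<bar>Gfun p K \<alpha> x\<bar> = p / \<bar>\<alpha> + p - 1\<bar> * (x + K) powr ((\<alpha> + p - 1) / p)"
    using assms by (simp add: Gfun_def abs_mult)
  then show ?thesis
    using assms by (simp add: powr_mult powr_divide powr_powr)
qed

lemma Gfun_nonpos:
  assumes "0 < p" "\<alpha> + p - 1 < 0"
  shows "Gfun p K \<alpha> x \<le> 0"
  using assms by (simp add: Gfun_def divide_nonneg_neg)

lemma cross_term_powr_le:
  assumes p: "1 < p" and \<alpha>: "\<alpha> < 0" "\<alpha> + p - 1 \<noteq> 0"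
    and y: "0 < y + K" and yx: "y < x" and xM: "x \<le> M"
  shows "((x - y) powr (p - 1) * - Ffun K M \<alpha> x) powr p
    \<le> (\<bar>\<alpha> + p - 1\<bar> / \<bar>\<alpha>\<bar>) powr p * \<bar>Gfun p K \<alpha> x\<bar> powr p
      * ((Gfun p K \<alpha> x - Gfun p K \<alpha> y) powr p) powr (p - 1)"
proof -
  define u where "u = x + K"
  define d where "d = x - y"
  define q where "q = - \<alpha>"
  have u: "0 < u" and d: "0 < d" and q: "0 < q" and s: "0 < \<bar>\<alpha> + p - 1\<bar>"
    using y yx \<alpha> by (auto simp: u_def d_def q_def)
  have "0 \<le> - Ffun K M \<alpha> x" "- Ffun K M \<alpha> x \<le> u powr \<alpha> / q"
    using Ffun_nonpos[OF \<alpha>(1)] minus_Ffun_le[OF \<alpha>(1)] y yx xM by (auto simp: u_def q_def)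
  then have "((x - y) powr (p - 1) * - Ffun K M \<alpha> x) powr p \<le> (d powr (p - 1) * (u powr \<alpha> / q)) powr p"
    unfolding d_def[symmetric] using p by (intro powr_mono2 mult_left_mono mult_nonneg_nonneg) auto
  also have "\<dots> = d powr ((p - 1) * p) * u powr (\<alpha> * p) / q powr p"
    using d u q by (simp add: powr_mult powr_divide powr_powr)
  \<comment> \<open>This bound and the target are monomials in \<open>u\<close> and \<open>d\<close> that agree up to the factor \<open>p\<^sup>p\<close>.\<close>
  also have "\<dots> \<le> p powr p * (d powr ((p - 1) * p) * u powr (\<alpha> * p) / q powr p)"
    using mult_right_mono[OF ge_one_powr_ge_zero[of p p], of "d powr ((p - 1) * p) * u powr (\<alpha> * p) / q powr p"] p
    by simp
  also have "\<dots> = (\<bar>\<alpha> + p - 1\<bar> / q) powr p * ((p / \<bar>\<alpha> + p - 1\<bar>) powr p * u powr (\<alpha> + p - 1))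
      * (u powr (\<alpha> - 1) * d powr p) powr (p - 1)"
  proof -
    have "u powr (\<alpha> * p) = u powr (\<alpha> + p - 1) * u powr ((\<alpha> - 1) * (p - 1))"
      by (simp add: powr_add[symmetric] algebra_simps)
    then show ?thesis
      using u d q s p by (simp add: powr_mult powr_divide powr_powr mult_ac)
  qed
  also have "\<dots> \<le> (\<bar>\<alpha> + p - 1\<bar> / \<bar>\<alpha>\<bar>) powr p * \<bar>Gfun p K \<alpha> x\<bar> powr p
      * ((Gfun p K \<alpha> x - Gfun p K \<alpha> y) powr p) powr (p - 1)"
  proof -
    have "(u powr ((\<alpha> - 1) / p) * d) powr p \<le> (Gfun p K \<alpha> x - Gfun p K \<alpha> y) powr p"
      using Gfun_increment_ge[of p \<alpha> y K x] p \<alpha> y yx u d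
      by (intro powr_mono2) (auto simp: u_def d_def)
    moreover have "(u powr ((\<alpha> - 1) / p) * d) powr p = u powr (\<alpha> - 1) * d powr p"
      using u d p by (simp add: powr_mult powr_powr)
    moreover have "\<bar>Gfun p K \<alpha> x\<bar> powr p = (p / \<bar>\<alpha> + p - 1\<bar>) powr p * u powr (\<alpha> + p - 1)"
      using abs_Gfun_powr[of p x K \<alpha>] p y yx by (simp add: u_def)
    moreover have "\<bar>\<alpha>\<bar> = q"
      using \<alpha> by (simp add: q_def)
    ultimately show ?thesis
      using u d p by (simp add: mult_left_mono powr_mono2)
  qed
  finally show ?thesis .
qed

lemma Ffun_Gfun_estimate_ordered:
  fixes p K M \<alpha> x y a b :: real
  assumes p: "1 < p" and K: "0 < K" and \<alpha>: "\<alpha> < -(p - 1)"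
    and y: "0 \<le> y" and yx: "y < x" and xM: "x \<le> M" and a: "0 \<le> a" and b: "0 \<le> b"
  shows "1/2 * \<bar>Gfun p K \<alpha> x - Gfun p K \<alpha> y\<bar> powr p * max (a powr p) (b powr p)
      - p * (2 * p) powr (p - 1) * 2 powr p * (1 + (\<bar>\<alpha> + p - 1\<bar> / \<bar>\<alpha>\<bar>) powr p)
        * max (\<bar>Gfun p K \<alpha> x\<bar> powr p) (\<bar>Gfun p K \<alpha> y\<bar> powr p) * \<bar>a - b\<bar> powr p
    \<le> (x - y) powr (p - 1) * (Ffun K M \<alpha> x * a powr p - Ffun K M \<alpha> y * b powr p)"
proof -
  define P where "P = (Gfun p K \<alpha> x - Gfun p K \<alpha> y) powr p"
  define Q where "Q = (x - y) powr (p - 1) * - Ffun K M \<alpha> x"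
  define W where "W = max (\<bar>Gfun p K \<alpha> x\<bar> powr p) (\<bar>Gfun p K \<alpha> y\<bar> powr p)"
  define \<rho> where "\<rho> = (\<bar>\<alpha> + p - 1\<bar> / \<bar>\<alpha>\<bar>) powr p"
  have \<alpha>': "\<alpha> < 0" "\<alpha> \<le> 1" "\<alpha> + p - 1 \<noteq> 0" "\<alpha> + p - 1 < 0" and yK: "0 < y + K"
    using p \<alpha> y K by auto
  have "0 < (x + K) powr ((\<alpha> - 1) / p) * (x - y)"
    using yK yx by simp
  then have G_increment: "0 < Gfun p K \<alpha> x - Gfun p K \<alpha> y"
    using Gfun_increment_ge[of p \<alpha> y K x] p \<alpha>' yK yx by linarith
  then have P: "0 < P"
    by (simp add: P_def)
  have Q: "0 \<le> Q"
    using Ffun_nonpos[OF \<alpha>'(1)] yK yx xM by (simp add: Q_def mult_nonneg_nonpos)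
  have PW: "P \<le> W"
  proof -
    have "Gfun p K \<alpha> x - Gfun p K \<alpha> y \<le> \<bar>Gfun p K \<alpha> y\<bar>"
      using Gfun_nonpos[of p \<alpha> K x] p \<alpha>' by simp
    then have "P \<le> \<bar>Gfun p K \<alpha> y\<bar> powr p"
      unfolding P_def using G_increment p by (intro powr_mono2) auto
    then show ?thesis
      by (simp add: W_def)
  qed
  have QP: "Q powr p \<le> \<rho> * W * P powr (p - 1)"
  proof -
    have "Q powr p \<le> \<rho> * \<bar>Gfun p K \<alpha> x\<bar> powr p * P powr (p - 1)"
      using cross_term_powr_le[OF p \<alpha>'(1,3) yK yx xM] by (simp add: Q_def \<rho>_def P_def)
    also have "\<dots> \<le> \<rho> * W * P powr (p - 1)"
      by (intro mult_right_mono mult_left_mono) (auto simp: W_def \<rho>_def)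
    finally show ?thesis .
  qed
  have "P * b powr p - Q * (a powr p - b powr p)
      \<le> (x - y) powr (p - 1) * (Ffun K M \<alpha> x - Ffun K M \<alpha> y) * b powr p - Q * (a powr p - b powr p)"
    using Gfun_increment_powr_le[OF p \<alpha>'(1)[THEN less_imp_neq] \<alpha>'(3) yK yx, of M]
    by (simp add: P_def mult_right_mono)
  also have "\<dots> = (x - y) powr (p - 1) * (Ffun K M \<alpha> x * a powr p - Ffun K M \<alpha> y * b powr p)"
    by (simp add: Q_def algebra_simps)
  finally show ?thesis
    using absorb_cross_term[OF p P Q PW _ QP a b] G_increment
    by (simp add: P_def W_def \<rho>_def)
qed

lemma sgnpow_pos: "0 < t \<Longrightarrow> sgnpow p t = t powr (p - 1)"
  by (simp add: sgnpow_def powr_diff field_simps power2_eq_square)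

lemma sgnpow_minus: "sgnpow p (- t) = - sgnpow p t"
  by (simp add: sgnpow_def)

lemma Ffun_Gfun_estimate:
  fixes p K M \<alpha> x y a b :: real
  assumes p: "1 < p" and K: "0 < K" and \<alpha>: "\<alpha> < -(p - 1)"
    and x: "x \<in> {0..M}" and y: "y \<in> {0..M}" and a: "0 \<le> a" and b: "0 \<le> b"
  shows "1/2 * \<bar>Gfun p K \<alpha> x - Gfun p K \<alpha> y\<bar> powr p * max (a powr p) (b powr p)
      - p * (2 * p) powr (p - 1) * 2 powr p * (1 + (\<bar>\<alpha> + p - 1\<bar> / \<bar>\<alpha>\<bar>) powr p)
        * max (\<bar>Gfun p K \<alpha> x\<bar> powr p) (\<bar>Gfun p K \<alpha> y\<bar> powr p) * \<bar>a - b\<bar> powr p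
    \<le> sgnpow p (x - y) * (Ffun K M \<alpha> x * a powr p - Ffun K M \<alpha> y * b powr p)"
proof -
  consider "x = y" | "y < x" | "x < y"
    by linarith
  then show ?thesis
  proof cases
    case 1
    then show ?thesis
      using p by (simp add: sgnpow_def mult_nonneg_nonneg le_max_iff_disj)
  next
    case 2
    then show ?thesis
      using Ffun_Gfun_estimate_ordered[OF p K \<alpha> _ 2 _ a b] x y by (simp add: sgnpow_pos)
  next
    case 3
    have "sgnpow p (x - y) = - ((y - x) powr (p - 1))"
      using sgnpow_minus[of p "y - x"] sgnpow_pos[of "y - x" p] 3 by simp
    then show ?thesis
      using Ffun_Gfun_estimate_ordered[OF p K \<alpha> _ 3 _ b a] x y
      by (simp add: abs_minus_commute max.commute algebra_simps)
  qed
qed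

theorem mainTheorem20:
  fixes p :: real
  assumes "1 < p"
  shows "\<exists>C>0. \<forall>K M \<alpha> x y a b. 0 < K \<longrightarrow> 0 \<le> M \<longrightarrow> \<alpha> < -(p - 1) \<longrightarrow>
     x \<in> {0..M} \<longrightarrow> y \<in> {0..M} \<longrightarrow> 0 \<le> a \<longrightarrow> 0 \<le> b \<longrightarrow>
     sgnpow p (x - y) * (Ffun K M \<alpha> x * a powr p - Ffun K M \<alpha> y * b powr p)
     \<ge> 1/2 * \<bar>Gfun p K \<alpha> x - Gfun p K \<alpha> y\<bar> powr p * max (a powr p) (b powr p)
       - C * (1 + (\<bar>\<alpha> + p - 1\<bar> / \<bar>\<alpha>\<bar>) powr p)
           * max (\<bar>Gfun p K \<alpha> x\<bar> powr p) (\<bar>Gfun p K \<alpha> y\<bar> powr p) * \<bar>a - b\<bar> powr p"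
proof (intro exI[of _ "p * (2 * p) powr (p - 1) * 2 powr p"] conjI allI impI)
  show "0 < p * (2 * p) powr (p - 1) * 2 powr p"
    using assms by simp
qed (rule Ffun_Gfun_estimate[OF assms])

end
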